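(* For all integers $2\le n\le m$, $\gamma_{2t}(K_n\Box K_m)\ge \min\{m+2,\,2n\}$. Moreover, $\gamma_{2t}(K_n\Box K_m)=2n$ whenever $m\ge 2n-2$.
   Context: For a graph $G=(V,E)$, a set $S\subseteq V$ is a total $2$-dominating set if every vertex of $V$ (including those in $S$) is adjacent to at least $2$ vertices of $S$; $\gamma_{2t}(G)$ is the minimum cardinality of such a set. $G\Box H$ denotes the Cartesian product: vertex set $V(G)\times V(H)$, with $(u_1,v_1)\sim(u_2,v_2)$ iff either $u_1=u_2$ and $v_1\sim v_2$, or $v_1=v_2$ and $u_1\sim u_2$. $K_n$ is the complete graph on $n$ vertices. *)

theory Defs
  imports Main
begin

definition total_k_dominating :: "'a set \<Rightarrow> ('a \<Rightarrow> 'a \<Rightarrow> bool) \<Rightarrow> nat \<Rightarrow> 'a set \<Rightarrow> bool" where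
  "total_k_dominating V adj k S \<longleftrightarrow>
     S \<subseteq> V \<and> (\<forall>v\<in>V. card {u\<in>S. adj v u} \<ge> k)"

definition gamma_2t :: "'a set \<Rightarrow> ('a \<Rightarrow> 'a \<Rightarrow> bool) \<Rightarrow> nat" where
  "gamma_2t V adj = (LEAST c. \<exists>S. total_k_dominating V adj 2 S \<and> card S = c)"

definition K_adj :: "nat \<Rightarrow> nat \<Rightarrow> bool" where
  "K_adj u v \<longleftrightarrow> u \<noteq> v"

definition cart_adj :: "('a \<Rightarrow> 'a \<Rightarrow> bool) \<Rightarrow> ('b \<Rightarrow> 'b \<Rightarrow> bool) \<Rightarrow> ('a \<times> 'b) \<Rightarrow> ('a \<times> 'b) \<Rightarrow> bool" where
  "cart_adj adjG adjH x y \<longleftrightarrow>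
     (fst x = fst y \<and> adjH (snd x) (snd y)) \<or> (snd x = snd y \<and> adjG (fst x) (fst y))"

definition KK_vertices :: "nat \<Rightarrow> nat \<Rightarrow> (nat \<times> nat) set" where
  "KK_vertices n m = {0..<n} \<times> {0..<m}"

end

theory Submission
  imports Defs
begin

text \<open>
  \<open>K\<^sub>n \<box> K\<^sub>m\<close> is the rook graph: two cells are adjacent iff they are distinct and share a row
  or a column. Write \<open>R\<^sub>i\<close>, \<open>C\<^sub>j\<close> for the number of cells of \<open>S\<close> in row \<open>i\<close>, column \<open>j\<close>, and
  \<open>e\<^sub>j = [(i,j) \<in> S]\<close>. The cell \<open>(i,j)\<close> has \<open>R\<^sub>i + C\<^sub>j - 2e\<^sub>j\<close> neighbours in \<open>S\<close>, so
  \<open>C\<^sub>j \<ge> 2 - R\<^sub>i + 2e\<^sub>j\<close>; summing over \<open>j\<close> gives \<open>|S| \<ge> m(2 - R\<^sub>i) + 2R\<^sub>i\<close>.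
  Hence either every row holds two cells of \<open>S\<close> and \<open>|S| \<ge> 2n\<close>, or some row holds at
  most one and \<open>|S| \<ge> m + 2\<close>. Two full columns form a total 2-dominating set of size \<open>2n\<close>.
\<close>

definition rook_adj :: "'a \<times> 'b \<Rightarrow> 'a \<times> 'b \<Rightarrow> bool" where
  "rook_adj x y \<longleftrightarrow> x \<noteq> y \<and> (fst x = fst y \<or> snd x = snd y)"

lemma cart_adj_K_adj_eq_rook_adj: "cart_adj K_adj K_adj = rook_adj"
  by (auto simp: fun_eq_iff cart_adj_def K_adj_def rook_adj_def prod_eq_iff)

lemma gamma_2t_le_card:
  assumes "total_k_dominating V adj 2 S"
  shows "gamma_2t V adj \<le> card S"
  unfolding gamma_2t_def using assms by (intro Least_le) blast

lemma gamma_2t_geI: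
  assumes "total_k_dominating V adj 2 S\<^sub>0"
    and "\<And>S. total_k_dominating V adj 2 S \<Longrightarrow> c \<le> card S"
  shows "c \<le> gamma_2t V adj"
proof -
  have "\<exists>S. total_k_dominating V adj 2 S \<and> card S = gamma_2t V adj"
    unfolding gamma_2t_def using LeastI_ex[of "\<lambda>c. \<exists>S. total_k_dominating V adj 2 S \<and> card S = c"] assms(1)
    by blast
  then show ?thesis using assms(2) by metis
qed

lemma two_le_cardI: "finite X \<Longrightarrow> a \<in> X \<Longrightarrow> b \<in> X \<Longrightarrow> a \<noteq> b \<Longrightarrow> 2 \<le> card X"
  using card_mono[of X "{a, b}"] by auto

lemma card_eq_sum_card_fibres:
  assumes "finite S" "finite A" "f ` S \<subseteq> A"
  shows "card S = (\<Sum>a\<in>A. card {x\<in>S. f x = a})"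
  using sum.group[OF assms, of "\<lambda>_. 1::nat"] by simp

lemma card_rook_neighbours:
  assumes "finite S"
  shows "card {u\<in>S. rook_adj v u}
           = card ({x\<in>S. fst x = fst v} - {v}) + card ({x\<in>S. snd x = snd v} - {v})"
proof -
  have "{u\<in>S. rook_adj v u} = ({x\<in>S. fst x = fst v} - {v}) \<union> ({x\<in>S. snd x = snd v} - {v})"
    by (auto simp: rook_adj_def)
  moreover have "({x\<in>S. fst x = fst v} - {v}) \<inter> ({x\<in>S. snd x = snd v} - {v}) = {}"
    by (auto simp: prod_eq_iff)
  ultimately show ?thesis using assms by (simp add: card_Un_disjoint)
qed

lemma column_count_ge:
  assumes "finite S" and T: "total_k_dominating (A \<times> B) rook_adj 2 S"
    and "i \<in> A" "j \<in> B"
  shows "2 - int (card {x\<in>S. fst x = i}) + 2 * of_bool ((i, j) \<in> S)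
           \<le> int (card {x\<in>S. snd x = j})"
proof -
  let ?e = "of_bool ((i, j) \<in> S) :: nat"
  have "2 \<le> card {u\<in>S. rook_adj (i, j) u}"
    using T assms(3,4) by (auto simp: total_k_dominating_def)
  moreover have "card ({x\<in>S. fst x = i} - {(i, j)}) = card {x\<in>S. fst x = i} - ?e"
    and "card ({x\<in>S. snd x = j} - {(i, j)}) = card {x\<in>S. snd x = j} - ?e"
    using assms(1) by (simp_all add: card_Diff_singleton_if)
  moreover have "?e \<le> card {x\<in>S. fst x = i}" "?e \<le> card {x\<in>S. snd x = j}"
    using assms(1) by (auto simp: Suc_le_eq card_gt_0_iff)
  ultimately show ?thesis
    using card_rook_neighbours[OF assms(1), of "(i, j)"] by (cases "(i, j) \<in> S") auto
qed

lemma card_ge_by_row: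
  assumes "finite A" "finite B" and T: "total_k_dominating (A \<times> B) rook_adj 2 S"
    and "i \<in> A"
  shows "int (card B) * (2 - int (card {x\<in>S. fst x = i})) + 2 * int (card {x\<in>S. fst x = i})
           \<le> int (card S)"
proof -
  let ?R = "{x\<in>S. fst x = i}"
  have S_sub: "S \<subseteq> A \<times> B" using T by (simp add: total_k_dominating_def)
  then have fin: "finite S" using assms(1,2) finite_subset by blast
  have "card ?R = (\<Sum>j\<in>B. card {x\<in>?R. snd x = j})"
    using S_sub fin assms(2) by (intro card_eq_sum_card_fibres) auto
  also have "\<dots> = (\<Sum>j\<in>B. of_bool ((i, j) \<in> S))"
  proof (rule sum.cong)
    fix j
    have "{x\<in>?R. snd x = j} = S \<inter> {(i, j)}" by (auto simp: prod_eq_iff)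
    then show "card {x\<in>?R. snd x = j} = of_bool ((i, j) \<in> S)" by auto
  qed simp
  finally have row: "int (card ?R) = (\<Sum>j\<in>B. of_bool ((i, j) \<in> S))"
    by (simp add: of_nat_sum)
  have "int (card B) * (2 - int (card ?R)) + 2 * int (card ?R)
          = (\<Sum>j\<in>B. 2 - int (card ?R) + 2 * of_bool ((i, j) \<in> S))"
    by (simp add: sum.distrib row sum_distrib_left)
  also have "\<dots> \<le> (\<Sum>j\<in>B. int (card {x\<in>S. snd x = j}))"
    using column_count_ge[OF fin T assms(4)] by (intro sum_mono) simp
  also have "\<dots> = int (card S)"
    using S_sub fin assms(2) card_eq_sum_card_fibres[of S B snd] by (force simp flip: of_nat_sum)
  finally show ?thesis .
qed

lemma total_2_dominating_rook_card_ge: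
  assumes "finite A" "finite B" "2 \<le> card B"
    and T: "total_k_dominating (A \<times> B) rook_adj 2 S"
  shows "min (card B + 2) (2 * card A) \<le> card S"
proof (cases "\<forall>i\<in>A. 2 \<le> card {x\<in>S. fst x = i}")
  case True
  have S_sub: "S \<subseteq> A \<times> B" using T by (simp add: total_k_dominating_def)
  have "2 * card A = (\<Sum>i\<in>A. 2)" by simp
  also have "\<dots> \<le> (\<Sum>i\<in>A. card {x\<in>S. fst x = i})" using True by (intro sum_mono) auto
  also have "\<dots> = card S"
    using S_sub assms(1,2) finite_subset[OF S_sub]
    by (intro card_eq_sum_card_fibres[symmetric]) auto
  finally show ?thesis by simp
next
  case False
  then obtain i where "i \<in> A" and sparse: "card {x\<in>S. fst x = i} \<le> 1" by force
  from card_ge_by_row[OF assms(1,2) T this(1)] sparse assms(3)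
  show ?thesis by (cases "card {x\<in>S. fst x = i}") auto
qed

lemma total_2_dominating_two_columns:
  assumes "2 \<le> card A" "b\<^sub>0 \<in> B" "b\<^sub>1 \<in> B" "b\<^sub>0 \<noteq> b\<^sub>1"
  shows "total_k_dominating (A \<times> B) rook_adj 2 (A \<times> {b\<^sub>0, b\<^sub>1})"
  unfolding total_k_dominating_def
proof (intro conjI ballI)
  show "A \<times> {b\<^sub>0, b\<^sub>1} \<subseteq> A \<times> B" using assms(2,3) by auto
next
  fix v assume "v \<in> A \<times> B"
  then obtain a b where v: "v = (a, b)" "a \<in> A" by auto
  let ?N = "{u \<in> A \<times> {b\<^sub>0, b\<^sub>1}. rook_adj v u}"
  have fin: "finite ?N" using assms(1) card.infinite by force
  show "2 \<le> card ?N"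
  proof (cases "b \<in> {b\<^sub>0, b\<^sub>1}")
    case True
    obtain b' where b': "b' \<in> {b\<^sub>0, b\<^sub>1}" "b' \<noteq> b" using assms(4) by blast
    have "A \<noteq> {a}" using assms(1) by force
    then obtain a' where a': "a' \<in> A" "a' \<noteq> a" using v(2) by blast
    have "(a, b') \<in> ?N" "(a', b) \<in> ?N"
      using True v a' b' by (auto simp: rook_adj_def)
    with fin show ?thesis by (rule two_le_cardI) (use a' in auto)
  next
    case False
    have "(a, b\<^sub>0) \<in> ?N" "(a, b\<^sub>1) \<in> ?N" using False v by (auto simp: rook_adj_def)
    with fin show ?thesis by (rule two_le_cardI) (use assms(4) in auto)
  qed
qed

theorem proposition4:
  fixes n m :: nat
  assumes "2 \<le> n" and "n \<le> m"
  shows "gamma_2t (KK_vertices n m) (cart_adj K_adj K_adj) \<ge> min (m + 2) (2 * n)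
     \<and> (m \<ge> 2 * n - 2 \<longrightarrow> gamma_2t (KK_vertices n m) (cart_adj K_adj K_adj) = 2 * n)"
proof -
  let ?\<gamma> = "gamma_2t ({0..<n} \<times> {0..<m}) rook_adj"
  have two_columns: "total_k_dominating ({0..<n} \<times> {0..<m}) rook_adj 2 ({0..<n} \<times> {0, 1})"
    using assms by (intro total_2_dominating_two_columns) auto
  have lower: "min (m + 2) (2 * n) \<le> ?\<gamma>"
    using two_columns total_2_dominating_rook_card_ge[of "{0..<n}" "{0..<m}"] assms
    by (intro gamma_2t_geI) auto
  have upper: "?\<gamma> \<le> 2 * n"
    using gamma_2t_le_card[OF two_columns] by (simp add: card_cartesian_product)
  show ?thesis
    using lower upper unfolding KK_vertices_def cart_adj_K_adj_eq_rook_adj by auto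
qed

end
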